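(* Let $E$ be an IL FS encoder with $s$ states whose Kraft matrix $K$ is irreducible, and let $L_{\max}=\max_{z\in\mathcal{Z},x\in\mathcal{X}}L[f(z,x)]$. Then for all $z,z'\in\mathcal{Z}$ and every positive integer $n$, $$(K^n)_{zz'}=\sum_{\{x^n\in\mathcal{X}^n:\ g(z,x^n)=z'\}}2^{-L[f(z,x^n)]}\le 2^{(s-1)L_{\max}}.$$ Consequently, for every $z\in\mathcal{Z}$ and every $n$, $$\sum_{x^n\in\mathcal{X}^n}2^{-L[f(z,x^n)]}\le s\cdot 2^{(s-1)L_{\max}},\qquad \sum_{z\in\mathcal{Z}}\sum_{x^n\in\mathcal{X}^n}2^{-L[f(z,x^n)]}\le s^2\cdot 2^{(s-1)L_{\max}}.$$
   Context: A finite-state (FS) encoder is a quintuple $E=(\mathcal{X},\mathcal{Y},\mathcal{Z},f,g)$, where $\mathcal{X}$ is a finite source alphabet of size $\alpha$, $\mathcal{Y}$ is a finite set of binary strings (possibly containing the empty string, of length $0$), $\mathcal{Z}$ is a finite set of $s$ states, $f:\mathcal{Z}\times\mathcal{X}\to\mathcal{Y}$ is the output function and $g:\mathcal{Z}\times\mathcal{X}\to\mathcal{Z}$ is the next-state function. For $z\in\mathcal{Z}$ and $x^n=(x_1,\dots,x_n)\in\mathcal{X}^n$, set $z_1=z$, $z_{i+1}=g(z_i,x_i)$; write $g(z,x^n)=z_{n+1}$ and let $f(z,x^n)$ denote the binary string obtained by concatenating $f(z_1,x_1),\dots,f(z_n,x_n)$; its length is $L[f(z,x^n)]=\sum_{i=1}^n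 L[f(z_i,x_i)]$, where $L(\cdot)$ denotes the length of a binary string. The encoder is information lossless (IL) if for every $z\in\mathcal{Z}$ and every $n\ge1$, the map $x^n\mapsto (f(z,x^n),g(z,x^n))$ is injective on $\mathcal{X}^n$. The Kraft matrix of $E$ is the $s\times s$ nonnegative matrix $K$ with entries $K_{zz'}=\sum_{\{x\in\mathcal{X}:\ g(z,x)=z'\}}2^{-L[f(z,x)]}$ (an empty sum is $0$). *)

theory Defs
  imports Complex_Main "HOL-Library.Cardinality"
begin

text \<open>An FS encoder: states of finite type 'z, source alphabet of finite type 'x,
  output function f (binary strings as bool lists), next-state function g.\<close>

fun fs_next :: "('z \<Rightarrow> 'x \<Rightarrow> 'z) \<Rightarrow> 'z \<Rightarrow> 'x list \<Rightarrow> 'z" where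
  "fs_next g z [] = z"
| "fs_next g z (x # xs) = fs_next g (g z x) xs"

fun fs_out :: "('z \<Rightarrow> 'x \<Rightarrow> bool list) \<Rightarrow> ('z \<Rightarrow> 'x \<Rightarrow> 'z) \<Rightarrow> 'z \<Rightarrow> 'x list \<Rightarrow> bool list" where
  "fs_out f g z [] = []"
| "fs_out f g z (x # xs) = f z x @ fs_out f g (g z x) xs"

definition info_lossless :: "('z \<Rightarrow> 'x \<Rightarrow> bool list) \<Rightarrow> ('z \<Rightarrow> 'x \<Rightarrow> 'z) \<Rightarrow> bool" where
  "info_lossless f g \<longleftrightarrow>
     (\<forall>z n. n \<ge> 1 \<longrightarrow> inj_on (\<lambda>xs. (fs_out f g z xs, fs_next g z xs)) {xs. length xs = n})"

definition kraft_matrix :: "('z \<Rightarrow> 'x::finite \<Rightarrow> bool list) \<Rightarrow> ('z \<Rightarrow> 'x \<Rightarrow> 'z) \<Rightarrow> 'z \<Rightarrow> 'z \<Rightarrow> real" where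
  "kraft_matrix f g z z' = (\<Sum>x\<in>{x. g z x = z'}. (1/2::real) ^ length (f z x))"

primrec mat_pow :: "('z::finite \<Rightarrow> 'z \<Rightarrow> real) \<Rightarrow> nat \<Rightarrow> 'z \<Rightarrow> 'z \<Rightarrow> real" where
  "mat_pow K 0 = (\<lambda>z z'. if z = z' then 1 else 0)"
| "mat_pow K (Suc n) = (\<lambda>z z'. \<Sum>w\<in>UNIV. mat_pow K n z w * K w z')"

definition irreducible_mat :: "('z::finite \<Rightarrow> 'z \<Rightarrow> real) \<Rightarrow> bool" where
  "irreducible_mat K \<longleftrightarrow> (\<forall>z z'. \<exists>m. mat_pow K m z z' > 0)"

definition L_max :: "('z::finite \<Rightarrow> 'x::finite \<Rightarrow> bool list) \<Rightarrow> nat" where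
  "L_max f = Max {length (f z x) | z x. True}"

end

theory Submission
  imports Defs
begin

text \<open>
  The (z, z') entry of K^n is the sum of the weights 2^-L[f(z, x^n)] over the input words x^n
  leading from z to z'. Information losslessness makes the codewords of these words distinct,
  and they have length at most n L_max, so counting binary strings bounds the entry by
  n L_max + 1. Since (K^N)_zz ^ k <= (K^(kN))_zz, this linear growth forces (K^N)_zz <= 1.
  Irreducibility provides a word of length m < s leading from z' back to z, of weight at least
  2^-(m L_max), and (K^n)_zz' 2^-(m L_max) <= (K^(n+m))_zz <= 1.
\<close>

lemma fs_next_append: "fs_next g z (xs @ ys) = fs_next g (fs_next g z xs) ys"
  by (induction xs arbitrary: z) auto

lemma fs_out_append: "fs_out f g z (xs @ ys) = fs_out f g z xs @ fs_out f g (fs_next g z xs) ys"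
  by (induction xs arbitrary: z) auto

lemma length_le_L_max:
  fixes f :: "'z::finite \<Rightarrow> 'x::finite \<Rightarrow> bool list"
  shows "length (f z x) \<le> L_max f"
proof -
  have "{length (f z x) | z x. True} = (\<lambda>(z, x). length (f z x)) ` UNIV" by auto
  then have "finite {length (f z x) | z x. True}" by simp
  then show ?thesis unfolding L_max_def by (rule Max_ge) auto
qed

lemma length_fs_out_le:
  fixes f :: "'z::finite \<Rightarrow> 'x::finite \<Rightarrow> bool list"
  shows "length (fs_out f g z xs) \<le> length xs * L_max f"
proof (induction xs arbitrary: z)
  case (Cons x xs)
  then show ?case using length_le_L_max[of f z x] by (simp add: add_mono)
qed simp

lemma fs_next_short_word:
  fixes g :: "'z::finite \<Rightarrow> 'x \<Rightarrow> 'z"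
  assumes "fs_next g a xs = b"
  shows "\<exists>ys. length ys < CARD('z) \<and> fs_next g a ys = b"
  using assms
proof (induction "length xs" arbitrary: xs rule: less_induct)
  case less
  show ?case
  proof (cases "length xs < CARD('z)")
    case False
    let ?state = "\<lambda>i. fs_next g a (take i xs)"
    have "card (?state ` {0..length xs}) < card {0..length xs}"
      using False card_mono[of UNIV "?state ` {0..length xs}"] by simp
    then have "\<not> inj_on ?state {0..length xs}"
      by (rule pigeonhole)
    then have "\<exists>i j. i < j \<and> j \<le> length xs \<and> ?state i = ?state j"
      by (auto simp: inj_on_def) (metis linorder_neqE_nat)
    then obtain i j where ij: "i < j" "j \<le> length xs" "?state i = ?state j"
      by blast
    define ys where "ys = take i xs @ drop j xs"
    have "fs_next g a ys = fs_next g (?state j) (drop j xs)"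
      unfolding ys_def fs_next_append using ij by simp
    also have "\<dots> = b"
      using less.prems fs_next_append[of g a "take j xs" "drop j xs"] by simp
    finally show ?thesis
      using less.hyps[of ys] ij unfolding ys_def by simp
  qed (use less.prems in blast)
qed

lemma finite_lists_length_UNIV: "finite {xs :: 'a::finite list. length xs = n}"
  using finite_lists_length_eq[of "UNIV :: 'a set" n] by simp

lemma finite_lists_length_le_UNIV: "finite {xs :: 'a::finite list. length xs \<le> n}"
  using finite_lists_length_le[of "UNIV :: 'a set" n] by simp

lemma sum_lists_length_Suc:
  fixes h :: "'a::finite list \<Rightarrow> 'b::comm_monoid_add"
  shows "(\<Sum>xs\<in>{xs. length xs = Suc n}. h xs) = (\<Sum>xs\<in>{xs. length xs = n}. \<Sum>x\<in>UNIV. h (xs @ [x]))"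
proof -
  let ?snoc = "\<lambda>(xs, x :: 'a). xs @ [x]"
  have snoc_image: "{xs. length xs = Suc n} = ?snoc ` ({xs. length xs = n} \<times> UNIV)"
    by (auto simp: length_Suc_conv_rev)
  have "inj_on ?snoc ({xs. length xs = n} \<times> UNIV)"
    by (auto simp: inj_on_def)
  then have "(\<Sum>xs\<in>{xs. length xs = Suc n}. h xs) = (\<Sum>p\<in>{xs. length xs = n} \<times> UNIV. h (?snoc p))"
    unfolding snoc_image by (rule sum.reindex_cong) auto
  also have "\<dots> = (\<Sum>xs\<in>{xs. length xs = n}. \<Sum>x\<in>UNIV. h (xs @ [x]))"
    by (simp add: sum.cartesian_product case_prod_unfold)
  finally show ?thesis .
qed

lemma sum_half_power_bool_lists_length_eq:
  "(\<Sum>t\<in>{t :: bool list. length t = n}. (1/2::real) ^ length t) = 1"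
proof -
  have "card {t :: bool list. length t = n} = 2 ^ n"
    using card_lists_length_eq[of "UNIV :: bool set" n] by simp
  then show ?thesis
    by (simp add: power_one_over)
qed

lemma sum_half_power_bool_lists_length_le:
  "(\<Sum>t\<in>{t :: bool list. length t \<le> M}. (1/2::real) ^ length t) = real M + 1"
proof (induction M)
  case 0
  have "{t :: bool list. length t \<le> 0} = {[]}" by auto
  then show ?case by simp
next
  case (Suc M)
  have lists_le_Suc: "{t :: bool list. length t \<le> Suc M} = {t. length t \<le> M} \<union> {t. length t = Suc M}"
    by auto
  have "(\<Sum>t\<in>{t :: bool list. length t \<le> Suc M}. (1/2::real) ^ length t)
      = (\<Sum>t\<in>{t :: bool list. length t \<le> M}. (1/2) ^ length t)
        + (\<Sum>t\<in>{t :: bool list. length t = Suc M}. (1/2) ^ length t)"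
    unfolding lists_le_Suc
    by (rule sum.union_disjoint) (auto simp: finite_lists_length_UNIV finite_lists_length_le_UNIV)
  then show ?case
    unfolding Suc.IH sum_half_power_bool_lists_length_eq by simp
qed

lemma sum_half_power_length_inj_le:
  fixes c :: "'a \<Rightarrow> bool list"
  assumes "inj_on c A" and "\<And>a. a \<in> A \<Longrightarrow> length (c a) \<le> M"
  shows "(\<Sum>a\<in>A. (1/2::real) ^ length (c a)) \<le> real M + 1"
proof -
  have "(\<Sum>a\<in>A. (1/2::real) ^ length (c a)) = (\<Sum>t\<in>c ` A. (1/2::real) ^ length t)"
    using assms(1) by (simp add: sum.reindex)
  also have "\<dots> \<le> (\<Sum>t\<in>{t :: bool list. length t \<le> M}. (1/2::real) ^ length t)"
    by (intro sum_mono2 finite_lists_length_le_UNIV) (auto simp: assms(2))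
  finally show ?thesis
    by (simp add: sum_half_power_bool_lists_length_le)
qed

lemma le_one_if_powers_le_linear:
  fixes a c :: real
  assumes bound: "\<And>k. a ^ k \<le> real k * c + 1"
  shows "a \<le> 1"
proof (rule ccontr)
  assume "\<not> a \<le> 1"
  then have "(\<lambda>k. real k / a ^ k) \<longlonglongrightarrow> 0"
    by (intro lim_n_over_pown) simp
  then have "\<forall>\<^sub>F k in sequentially. real k / a ^ k < 1 / (\<bar>c\<bar> + 1)"
    by (rule order_tendstoD) simp
  then obtain k where k: "k \<ge> 1" "real k / a ^ k < 1 / (\<bar>c\<bar> + 1)"
    unfolding eventually_sequentially by (meson le_add1 le_add2)
  then have "real k * (\<bar>c\<bar> + 1) < a ^ k"
    using \<open>\<not> a \<le> 1\<close> by (simp add: field_simps)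
  moreover have "real k * c + 1 \<le> real k * (\<bar>c\<bar> + 1)"
  proof -
    have "real k * c \<le> real k * \<bar>c\<bar>" and "1 \<le> real k"
      using k(1) by (simp_all add: mult_left_mono)
    then show ?thesis
      unfolding distrib_left mult_1_right by linarith
  qed
  ultimately show False
    using bound[of k] by simp
qed

lemma mat_pow_add: "mat_pow K (a + b) i j = (\<Sum>w\<in>UNIV. mat_pow K a i w * mat_pow K b w j)"
proof (induction b arbitrary: j)
  case 0
  show ?case by (simp add: if_distrib cong: if_cong)
next
  case (Suc b)
  have "mat_pow K (a + Suc b) i j = (\<Sum>v\<in>UNIV. \<Sum>w\<in>UNIV. mat_pow K a i w * mat_pow K b w v * K v j)"
    by (simp add: Suc.IH sum_distrib_right)
  also have "\<dots> = (\<Sum>w\<in>UNIV. mat_pow K a i w * mat_pow K (Suc b) w j)"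
    by (subst sum.swap) (simp add: sum_distrib_left mult.assoc)
  finally show ?case .
qed

lemma mat_pow_nonneg:
  assumes "\<And>i j. 0 \<le> K i j"
  shows "0 \<le> mat_pow K n i j"
  by (induction n arbitrary: j) (auto intro!: sum_nonneg simp: assms)

lemma mat_pow_mult_le_add:
  assumes "\<And>i j. 0 \<le> K i j"
  shows "mat_pow K a i w * mat_pow K b w j \<le> mat_pow K (a + b) i j"
  unfolding mat_pow_add by (rule member_le_sum) (auto simp: assms mat_pow_nonneg)

lemma mat_pow_diag_power_le:
  assumes "\<And>i j. 0 \<le> K i j"
  shows "mat_pow K n i i ^ k \<le> mat_pow K (k * n) i i"
proof (induction k)
  case (Suc k)
  have "mat_pow K n i i ^ Suc k \<le> mat_pow K n i i * mat_pow K (k * n) i i"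
    using Suc.IH by (simp add: mult_left_mono assms mat_pow_nonneg)
  also have "\<dots> \<le> mat_pow K (Suc k * n) i i"
    using mat_pow_mult_le_add[OF assms, where a = n and b = "k * n"] by (simp add: add.commute)
  finally show ?case .
qed simp

lemma kraft_matrix_nonneg: "0 \<le> kraft_matrix f g z z'"
  unfolding kraft_matrix_def by (simp add: sum_nonneg)

lemma mat_pow_kraft_matrix_eq_sum_if:
  fixes f :: "'z::finite \<Rightarrow> 'x::finite \<Rightarrow> bool list"
  shows "mat_pow (kraft_matrix f g) n z z' = (\<Sum>xs\<in>{xs. length xs = n}.
           if fs_next g z xs = z' then (1/2::real) ^ length (fs_out f g z xs) else 0)"
proof (induction n arbitrary: z')
  case 0
  have "{xs :: 'x list. length xs = 0} = {[]}" by auto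
  then show ?case by simp
next
  case (Suc n)
  let ?W = "\<lambda>xs. (1/2::real) ^ length (fs_out f g z xs)"
  have "mat_pow (kraft_matrix f g) (Suc n) z z'
      = (\<Sum>w\<in>UNIV. \<Sum>xs\<in>{xs. length xs = n}. (if fs_next g z xs = w then ?W xs else 0) * kraft_matrix f g w z')"
    by (simp add: Suc.IH sum_distrib_right)
  also have "\<dots> = (\<Sum>xs\<in>{xs. length xs = n}. ?W xs * kraft_matrix f g (fs_next g z xs) z')"
    by (subst sum.swap) (simp add: if_distrib[of "\<lambda>a. a * _"] cong: if_cong)
  also have "\<dots> = (\<Sum>xs\<in>{xs. length xs = n}. \<Sum>x\<in>UNIV.
      if fs_next g z (xs @ [x]) = z' then ?W (xs @ [x]) else 0)"
    by (simp add: kraft_matrix_def sum_distrib_left sum.If_cases Int_def fs_next_append fs_out_append power_add)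
  finally show ?case
    by (simp add: sum_lists_length_Suc)
qed

lemma mat_pow_kraft_matrix_eq_path_sum:
  fixes f :: "'z::finite \<Rightarrow> 'x::finite \<Rightarrow> bool list"
  shows "mat_pow (kraft_matrix f g) n z z'
           = (\<Sum>xs\<in>{xs. length xs = n \<and> fs_next g z xs = z'}. (1/2::real) ^ length (fs_out f g z xs))"
  unfolding mat_pow_kraft_matrix_eq_sum_if
  by (simp add: sum.If_cases finite_lists_length_UNIV Int_def conj_commute)

lemma sum_mat_pow_kraft_matrix_row:
  fixes f :: "'z::finite \<Rightarrow> 'x::finite \<Rightarrow> bool list"
  shows "(\<Sum>z'\<in>UNIV. mat_pow (kraft_matrix f g) n z z')
           = (\<Sum>xs\<in>{xs. length xs = n}. (1/2::real) ^ length (fs_out f g z xs))"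
  unfolding mat_pow_kraft_matrix_eq_sum_if by (subst sum.swap) simp

lemma mat_pow_kraft_matrix_ge_word:
  fixes f :: "'z::finite \<Rightarrow> 'x::finite \<Rightarrow> bool list"
  assumes "fs_next g z xs = z'"
  shows "(1/2::real) ^ (length xs * L_max f) \<le> mat_pow (kraft_matrix f g) (length xs) z z'"
proof -
  have "(1/2::real) ^ (length xs * L_max f) \<le> (1/2) ^ length (fs_out f g z xs)"
    by (intro power_decreasing length_fs_out_le) auto
  also have "\<dots> \<le> mat_pow (kraft_matrix f g) (length xs) z z'"
    unfolding mat_pow_kraft_matrix_eq_path_sum using assms
    by (intro member_le_sum) (auto simp: finite_lists_length_UNIV)
  finally show ?thesis .
qed

lemma info_lossless_inj_on_paths:
  assumes "info_lossless f g"
  shows "inj_on (fs_out f g z) {xs. length xs = n \<and> fs_next g z xs = z'}"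
proof (cases "n = 0")
  case False
  then have "inj_on (\<lambda>xs. (fs_out f g z xs, fs_next g z xs)) {xs. length xs = n}"
    using assms unfolding info_lossless_def by simp
  then show ?thesis
    by (auto simp: inj_on_def)
qed (auto simp: inj_on_def)

lemma mat_pow_kraft_matrix_le_linear:
  fixes f :: "'z::finite \<Rightarrow> 'x::finite \<Rightarrow> bool list"
  assumes "info_lossless f g"
  shows "mat_pow (kraft_matrix f g) n z z' \<le> real (n * L_max f) + 1"
  unfolding mat_pow_kraft_matrix_eq_path_sum
  by (intro sum_half_power_length_inj_le info_lossless_inj_on_paths[OF assms])
    (use length_fs_out_le in force)

lemma mat_pow_kraft_matrix_diag_le_one:
  fixes f :: "'z::finite \<Rightarrow> 'x::finite \<Rightarrow> bool list"
  assumes "info_lossless f g"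
  shows "mat_pow (kraft_matrix f g) n z z \<le> 1"
proof (rule le_one_if_powers_le_linear)
  fix k
  have "mat_pow (kraft_matrix f g) n z z ^ k \<le> mat_pow (kraft_matrix f g) (k * n) z z"
    by (rule mat_pow_diag_power_le[OF kraft_matrix_nonneg])
  also have "\<dots> \<le> real (k * n * L_max f) + 1"
    by (rule mat_pow_kraft_matrix_le_linear[OF assms])
  finally show "mat_pow (kraft_matrix f g) n z z ^ k \<le> real k * real (n * L_max f) + 1"
    by (simp add: mult.assoc)
qed

lemma irreducible_kraft_matrix_short_word:
  fixes f :: "'z::finite \<Rightarrow> 'x::finite \<Rightarrow> bool list"
  assumes "irreducible_mat (kraft_matrix f g)"
  obtains xs where "length xs < CARD('z)" and "fs_next g z xs = z'"
proof -
  obtain m where "0 < mat_pow (kraft_matrix f g) m z z'"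
    using assms unfolding irreducible_mat_def by blast
  then have "{xs. length xs = m \<and> fs_next g z xs = z'} \<noteq> {}"
    unfolding mat_pow_kraft_matrix_eq_path_sum by force
  then obtain xs where "fs_next g z xs = z'"
    by blast
  then show ?thesis
    using fs_next_short_word that by blast
qed

lemma mat_pow_kraft_matrix_le:
  fixes f :: "'z::finite \<Rightarrow> 'x::finite \<Rightarrow> bool list"
  assumes "info_lossless f g" and "irreducible_mat (kraft_matrix f g)"
  shows "mat_pow (kraft_matrix f g) n z z' \<le> 2 ^ ((CARD('z) - 1) * L_max f)"
proof -
  let ?K = "kraft_matrix f g"
  obtain ys where ys: "length ys < CARD('z)" "fs_next g z' ys = z"
    using irreducible_kraft_matrix_short_word[OF assms(2)] by blast
  define m where "m = length ys"
  have "mat_pow ?K n z z' * (1/2) ^ (m * L_max f) \<le> mat_pow ?K n z z' * mat_pow ?K m z' z"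
    using mat_pow_kraft_matrix_ge_word[OF ys(2)]
    by (simp add: m_def mult_left_mono mat_pow_nonneg kraft_matrix_nonneg)
  also have "\<dots> \<le> mat_pow ?K (n + m) z z"
    by (rule mat_pow_mult_le_add[OF kraft_matrix_nonneg])
  also have "\<dots> \<le> 1"
    by (rule mat_pow_kraft_matrix_diag_le_one[OF assms(1)])
  finally have "mat_pow ?K n z z' \<le> 2 ^ (m * L_max f)"
    by (simp add: power_one_over field_simps)
  also have "\<dots> \<le> 2 ^ ((CARD('z) - 1) * L_max f)"
    using ys(1) by (intro power_increasing) (auto simp: m_def)
  finally show ?thesis .
qed

theorem theorem2:
  fixes f :: "'z::finite \<Rightarrow> 'x::finite \<Rightarrow> bool list" and g :: "'z \<Rightarrow> 'x \<Rightarrow> 'z"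
  assumes "info_lossless f g"
    and "irreducible_mat (kraft_matrix f g)"
  shows "(\<forall>z z' n. n \<ge> 1 \<longrightarrow>
            mat_pow (kraft_matrix f g) n z z'
              = (\<Sum>xs\<in>{xs. length xs = n \<and> fs_next g z xs = z'}. (1/2::real) ^ length (fs_out f g z xs))
          \<and> mat_pow (kraft_matrix f g) n z z' \<le> (2::real) ^ ((CARD('z) - 1) * L_max f))
       \<and> (\<forall>z n. n \<ge> 1 \<longrightarrow>
            (\<Sum>xs\<in>{xs. length xs = n}. (1/2::real) ^ length (fs_out f g z xs))
              \<le> real CARD('z) * 2 ^ ((CARD('z) - 1) * L_max f))
       \<and> (\<forall>n. n \<ge> 1 \<longrightarrow>
            (\<Sum>z\<in>UNIV. \<Sum>xs\<in>{xs. length xs = n}. (1/2::real) ^ length (fs_out f g z xs))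
              \<le> real CARD('z) ^ 2 * 2 ^ ((CARD('z) - 1) * L_max f))"
proof -
  let ?B = "(2::real) ^ ((CARD('z) - 1) * L_max f)"
  have row: "(\<Sum>xs\<in>{xs. length xs = n}. (1/2::real) ^ length (fs_out f g z xs)) \<le> real CARD('z) * ?B"
    for z n
  proof -
    have "(\<Sum>z'\<in>UNIV. mat_pow (kraft_matrix f g) n z z') \<le> (\<Sum>z'\<in>(UNIV :: 'z set). ?B)"
      by (intro sum_mono mat_pow_kraft_matrix_le[OF assms])
    then show ?thesis
      by (simp add: sum_mat_pow_kraft_matrix_row)
  qed
  have total: "(\<Sum>z\<in>UNIV. \<Sum>xs\<in>{xs. length xs = n}. (1/2::real) ^ length (fs_out f g z xs))
      \<le> real CARD('z) ^ 2 * ?B" for n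
  proof -
    have "(\<Sum>z\<in>UNIV. \<Sum>xs\<in>{xs. length xs = n}. (1/2::real) ^ length (fs_out f g z xs))
        \<le> (\<Sum>z\<in>(UNIV :: 'z set). real CARD('z) * ?B)"
      by (intro sum_mono row)
    then show ?thesis
      by (simp add: power2_eq_square mult.assoc)
  qed
  show ?thesis
    using mat_pow_kraft_matrix_eq_path_sum mat_pow_kraft_matrix_le[OF assms] row total by blast
qed

end
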